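(* Let $\alpha_1,\dots,\alpha_m\in B_k$ and let $I=\langle\alpha_1,\dots,\alpha_m\rangle$ be the ideal of $B_k$ they generate. Then \[ I=\left\langle\sum_{A\subseteq\{1,\dots,m\},\,A\neq\emptyset}(-1)^{|A|+1}\Big(\prod_{j\in A}\alpha_j\Big)^{p^r-1}\right\rangle . \] In particular, every ideal of $B_k$ is principal.
   Context: Let $p$ be a prime, $r\ge 1$ an integer, and $\mathbb{F}_{p^r}$ the finite field with $p^r$ elements. For an integer $k\ge 1$, $B_k$ denotes the commutative ring $B_k=\mathbb{F}_{p^r}[v_1,\dots,v_k]/\langle v_i^2-v_i,\ v_iv_j-v_jv_i : 1\le i,j\le k\rangle$. *)

theory Defs
  imports "HOL-Computational_Algebra.Primes" "HOL-Algebra.Ideal"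
begin

text \<open>
  The ring B_k = F[v_1,...,v_k] / (v_i^2 - v_i, v_i v_j - v_j v_i), F a finite field.
  Modulo the relations v_i^2 = v_i every monomial reduces to a unique squarefree
  monomial v_S = prod_{i in S} v_i with S a subset of {1..k}, and these monomials
  form an F-basis of B_k, multiplied by v_S v_T = v_(S union T).
  We therefore represent an element of B_k by its coefficient function
  f :: nat set => 'a, supported on the subsets of {1..k} (f S = coefficient of v_S).
\<close>

definition Bk :: "nat \<Rightarrow> (nat set \<Rightarrow> 'a::field) ring" where
  "Bk k = \<lparr> carrier = {f. \<forall>S. \<not> S \<subseteq> {1..k} \<longrightarrow> f S = 0},
            mult = (\<lambda>f g. \<lambda>U. \<Sum>S\<in>Pow {1..k}. \<Sum>T\<in>Pow {1..k}.
                                    if S \<union> T = U then f S * g T else 0),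
            one = (\<lambda>S. if S = {} then 1 else 0),
            zero = (\<lambda>S. 0),
            add = (\<lambda>f g. \<lambda>S. f S + g S) \<rparr>"

definition Bk_var :: "nat \<Rightarrow> nat set \<Rightarrow> 'a::field" where
  "Bk_var i = (\<lambda>S. if S = {i} then 1 else 0)"

end

theory Submission
  imports Defs
begin

text \<open>
  For \<open>X \<subseteq> {1..k}\<close>, substituting \<open>v\<^sub>i := (if i \<in> X then 1 else 0)\<close> is a ring
  homomorphism \<open>B\<^sub>k \<rightarrow> F\<close>, \<open>f \<mapsto> \<Sum>S\<subseteq>X. f S\<close>, and these \<open>2\<^sup>k\<close> evaluations jointly
  separate the elements of \<open>B\<^sub>k\<close> (look at a nonzero coefficient \<open>f S\<close> with \<open>card S\<close> minimal).
  So identities in \<open>B\<^sub>k\<close>, the ring axioms included, can be checked pointwise in \<open>F\<close>.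
  If \<open>card F = q\<close> then \<open>a\<^sup>q\<^sup>-\<^sup>1 = 1\<close> for \<open>a \<noteq> 0\<close>, so the inclusion-exclusion sum \<open>g\<close>
  evaluates to \<open>1 - \<Prod>\<^sub>j (1 - \<alpha>\<^sub>j\<^sup>q\<^sup>-\<^sup>1)\<close>, which is \<open>1\<close> wherever some \<open>\<alpha>\<^sub>j\<close> does not vanish.
  Hence \<open>g \<alpha>\<^sub>j = \<alpha>\<^sub>j\<close> for all \<open>j\<close>, while every summand of \<open>g\<close> is a multiple of some \<open>\<alpha>\<^sub>j\<close>.
  Since \<open>B\<^sub>k\<close> is finite, every ideal is generated by its finitely many elements, hence
  principal.
\<close>

lemma sum_Pow_restrict:
  assumes "X \<subseteq> Y" "finite Y"
  shows "(\<Sum>S\<in>Pow Y. if S \<subseteq> X then f S else 0) = sum f (Pow X)"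
proof -
  have "Pow Y \<inter> {S. S \<subseteq> X} = Pow X"
    using assms by auto
  then show ?thesis
    using sum.inter_restrict[of "Pow Y" f "{S. S \<subseteq> X}"] assms by simp
qed

lemma field_power_card_minus_one:
  fixes a :: "'a::{field,finite}"
  assumes "a \<noteq> 0"
  shows "a ^ (card (UNIV :: 'a set) - 1) = 1"
proof -
  have "(\<Prod>y\<in>UNIV-{0}. a * y) = a ^ card (UNIV - {0::'a}) * (\<Prod>y\<in>UNIV-{0}. y)"
    by (simp add: prod.distrib)
  moreover have "(\<Prod>y\<in>UNIV-{0}. a * y) = (\<Prod>y\<in>UNIV-{0::'a}. y)"
    by (rule prod.reindex_bij_witness[of _ "\<lambda>y. y / a" "\<lambda>y. a * y"]) (use assms in auto)
  moreover have "(\<Prod>y\<in>UNIV-{0::'a}. y) \<noteq> 0"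
    by simp
  ultimately show ?thesis
    by (simp add: card_Diff_singleton)
qed

lemma one_minus_prod_one_minus:
  fixes a :: "'b \<Rightarrow> 'a::comm_ring_1"
  assumes "finite J"
  shows "1 - (\<Prod>j\<in>J. 1 - a j) = (\<Sum>A\<in>{A. A \<subseteq> J \<and> A \<noteq> {}}. (-1) ^ (card A + 1) * (\<Prod>j\<in>A. a j))"
proof -
  have "(\<Prod>j\<in>J. 1 - a j) = (\<Sum>A\<in>Pow J. (\<Prod>j\<in>A. - a j) * (\<Prod>j\<in>J - A. 1))"
    using prod_add[OF assms, of "\<lambda>j. - a j" "\<lambda>_. 1"] by simp
  also have "\<dots> = (\<Sum>A\<in>Pow J. (-1) ^ card A * (\<Prod>j\<in>A. a j))"
    by (simp add: prod_uminus)
  also have "\<dots> = 1 + (\<Sum>A\<in>Pow J - {{}}. (-1) ^ card A * (\<Prod>j\<in>A. a j))"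
    using assms by (subst sum.remove[of _ "{}"]) auto
  also have "Pow J - {{}} = {A. A \<subseteq> J \<and> A \<noteq> {}}"
    by auto
  finally show ?thesis
    by (simp add: sum_negf[symmetric])
qed

lemma (in ring) ideal_finsum_closed:
  assumes "ideal I R" "finite A" "f \<in> A \<rightarrow> I"
  shows "(\<Oplus>a \<in> A. f a) \<in> I"
  using assms(2,3)
proof (induction A rule: finite_induct)
  case (insert a A)
  have "f \<in> insert a A \<rightarrow> carrier R"
    using insert.prems ideal.Icarr[OF assms(1)] by blast
  with insert show ?case
    by (simp add: additive_subgroup.a_closed ideal.axioms(1)[OF assms(1)])
qed (simp add: additive_subgroup.zero_closed ideal.axioms(1)[OF assms(1)])

lemma (in cring) genideal_eq_genideal_singletonI:
  assumes "S \<subseteq> carrier R" "g \<in> Idl S" "\<And>s. s \<in> S \<Longrightarrow> g \<otimes> s = s"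
  shows "Idl S = Idl {g}"
proof
  show "Idl {g} \<subseteq> Idl S"
    using assms(1,2) by (intro genideal_minimal genideal_ideal) auto
  have "g \<in> carrier R"
    using ideal.Icarr[OF genideal_ideal[OF assms(1)] assms(2)] .
  then have ideal_g: "ideal (Idl {g}) R"
    by (intro genideal_ideal) simp
  have "g \<otimes> s \<in> Idl {g}" if "s \<in> S" for s
    using ideal.I_r_closed[OF ideal_g genideal_self'[OF \<open>g \<in> carrier R\<close>]] that assms(1) by blast
  then have "S \<subseteq> Idl {g}"
    using assms(3) by auto
  then show "Idl S \<subseteq> Idl {g}"
    by (rule genideal_minimal[OF ideal_g])
qed

definition incl_excl_power_sum :: "('a, 'b) ring_scheme \<Rightarrow> ('c \<Rightarrow> 'a) \<Rightarrow> 'c set \<Rightarrow> nat \<Rightarrow> 'a" where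
  "incl_excl_power_sum R \<alpha> J n = (\<Oplus>\<^bsub>R\<^esub> A \<in> {A. A \<subseteq> J \<and> A \<noteq> {}}.
     ((\<ominus>\<^bsub>R\<^esub> \<one>\<^bsub>R\<^esub>) [^]\<^bsub>R\<^esub> (card A + 1)) \<otimes>\<^bsub>R\<^esub> ((\<Otimes>\<^bsub>R\<^esub> j \<in> A. \<alpha> j) [^]\<^bsub>R\<^esub> n))"

lemma (in cring) incl_excl_power_sum_closed:
  assumes "\<alpha> \<in> J \<rightarrow> carrier R"
  shows "incl_excl_power_sum R \<alpha> J n \<in> carrier R"
  using assms unfolding incl_excl_power_sum_def
  by (intro finsum_closed Pi_I m_closed nat_pow_closed finprod_closed) auto

lemma (in cring) finprod_in_ideal:
  assumes "ideal I R" "finite A" "f \<in> A \<rightarrow> carrier R" "j \<in> A" "f j \<in> I"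
  shows "(\<Otimes>i\<in>A. f i) \<in> I"
proof -
  have "(\<Otimes>i\<in>A. f i) = (\<Otimes>i\<in>insert j (A - {j}). f i)"
    using assms(4) by (simp add: insert_absorb)
  also have "\<dots> = f j \<otimes> (\<Otimes>i\<in>A - {j}. f i)"
    using assms(2-4) by (intro finprod_insert) auto
  also have "\<dots> \<in> I"
    using assms by (intro ideal.I_r_closed finprod_closed) auto
  finally show ?thesis .
qed

lemma (in ring) nat_pow_in_ideal:
  assumes "ideal I R" "x \<in> I" "(n::nat) \<ge> 1"
  shows "x [^] n \<in> I"
proof -
  have "x \<in> carrier R"
    using ideal.Icarr[OF assms(1,2)] .
  have "x [^] n = x [^] (n - 1) \<otimes> x"
    using assms(3) nat_pow_Suc[of x "n - 1"] by (simp del: nat_pow_Suc)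
  also have "\<dots> \<in> I"
    using assms(2) \<open>x \<in> carrier R\<close> by (rule ideal.I_l_closed[OF assms(1) _ nat_pow_closed])
  finally show ?thesis .
qed

lemma (in cring) incl_excl_power_sum_in_genideal:
  assumes "finite J" "\<alpha> \<in> J \<rightarrow> carrier R" "n \<ge> 1"
  shows "incl_excl_power_sum R \<alpha> J n \<in> Idl (\<alpha> ` J)"
proof -
  have ideal_J: "ideal (Idl (\<alpha> ` J)) R"
    using assms(2) by (intro genideal_ideal) blast
  have "(\<ominus> \<one>) [^] (card A + 1) \<otimes> (\<Otimes>j\<in>A. \<alpha> j) [^] n \<in> Idl (\<alpha> ` J)"
    if A: "A \<subseteq> J" "A \<noteq> {}" for A
  proof -
    obtain j where "j \<in> A"
      using A by auto
    have "\<alpha> ` J \<subseteq> Idl (\<alpha> ` J)"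
      using assms(2) by (intro genideal_self) blast
    then have "(\<Otimes>j\<in>A. \<alpha> j) \<in> Idl (\<alpha> ` J)"
      using A assms(1,2) \<open>j \<in> A\<close> finite_subset[of A J]
      by (intro finprod_in_ideal[OF ideal_J]) auto
    then show ?thesis
      by (intro ideal.I_l_closed[OF ideal_J] nat_pow_in_ideal[OF ideal_J] assms(3) nat_pow_closed)
        simp_all
  qed
  then show ?thesis
    unfolding incl_excl_power_sum_def using assms(1)
    by (intro ideal_finsum_closed[OF ideal_J]) auto
qed

lemma Bk_simps:
  "carrier (Bk k) = {f. \<forall>S. \<not> S \<subseteq> {1..k} \<longrightarrow> f S = 0}"
  "f \<otimes>\<^bsub>Bk k\<^esub> g = (\<lambda>U. \<Sum>S\<in>Pow {1..k}. \<Sum>T\<in>Pow {1..k}. if S \<union> T = U then f S * g T else 0)"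
  "\<one>\<^bsub>Bk k\<^esub> = (\<lambda>S. if S = {} then 1 else 0)"
  "\<zero>\<^bsub>Bk k\<^esub> = (\<lambda>S. 0)"
  "f \<oplus>\<^bsub>Bk k\<^esub> g = (\<lambda>S. f S + g S)"
  by (simp_all add: Bk_def)

lemma Bk_add_closed: "f \<in> carrier (Bk k) \<Longrightarrow> g \<in> carrier (Bk k) \<Longrightarrow> f \<oplus>\<^bsub>Bk k\<^esub> g \<in> carrier (Bk k)"
  by (auto simp: Bk_simps)

lemma Bk_mult_closed: "f \<otimes>\<^bsub>Bk k\<^esub> g \<in> carrier (Bk k)"
proof -
  have "(if S \<union> T = U then f S * g T else 0) = 0"
    if "\<not> U \<subseteq> {1..k}" "S \<in> Pow {1..k}" "T \<in> Pow {1..k}" for S T U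
    using that by auto
  then show ?thesis
    by (simp add: Bk_simps)
qed

lemma finite_carrier_Bk: "finite (carrier (Bk k :: (nat set \<Rightarrow> 'a::{field,finite}) ring))"
proof -
  have "carrier (Bk k :: (nat set \<Rightarrow> 'a) ring) =
      {f. \<forall>S. (S \<in> Pow {1..k} \<longrightarrow> f S \<in> UNIV) \<and> (S \<notin> Pow {1..k} \<longrightarrow> f S = 0)}"
    by (auto simp: Bk_simps)
  moreover have "finite {f :: nat set \<Rightarrow> 'a.
      \<forall>S. (S \<in> Pow {1..k} \<longrightarrow> f S \<in> UNIV) \<and> (S \<notin> Pow {1..k} \<longrightarrow> f S = 0)}"
    by (rule finite_set_of_finite_funs) auto
  ultimately show ?thesis
    by simp
qed

definition Bk_eval :: "nat set \<Rightarrow> (nat set \<Rightarrow> 'a::field) \<Rightarrow> 'a" where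
  "Bk_eval X f = (\<Sum>S\<in>Pow X. f S)"

lemma Bk_eval_add: "Bk_eval X (f \<oplus>\<^bsub>Bk k\<^esub> g) = Bk_eval X f + Bk_eval X g"
  by (simp add: Bk_eval_def Bk_simps sum.distrib)

lemma Bk_eval_zero: "Bk_eval X (\<zero>\<^bsub>Bk k\<^esub> :: nat set \<Rightarrow> 'a::field) = 0"
  by (simp add: Bk_eval_def Bk_simps)

lemma Bk_eval_one: "finite X \<Longrightarrow> Bk_eval X (\<one>\<^bsub>Bk k\<^esub> :: nat set \<Rightarrow> 'a::field) = 1"
  by (simp add: Bk_eval_def Bk_simps sum.delta')

lemma Bk_eval_mult:
  fixes f g :: "nat set \<Rightarrow> 'a::field"
  assumes "X \<subseteq> {1..k}"
  shows "Bk_eval X (f \<otimes>\<^bsub>Bk k\<^esub> g) = Bk_eval X f * Bk_eval X g"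
proof -
  let ?P = "Pow {1..k}"
  have "finite X"
    using assms finite_subset by blast
  have "Bk_eval X (f \<otimes>\<^bsub>Bk k\<^esub> g) =
      (\<Sum>U\<in>Pow X. \<Sum>S\<in>?P. \<Sum>T\<in>?P. if S \<union> T = U then f S * g T else 0)"
    by (simp add: Bk_eval_def Bk_simps)
  also have "\<dots> = (\<Sum>S\<in>?P. \<Sum>T\<in>?P. \<Sum>U\<in>Pow X. if S \<union> T = U then f S * g T else 0)"
    by (subst sum.swap) (intro sum.cong refl sum.swap)
  also have "\<dots> = (\<Sum>S\<in>?P. \<Sum>T\<in>?P. (if S \<subseteq> X then f S else 0) * (if T \<subseteq> X then g T else 0))"
    using \<open>finite X\<close> by (intro sum.cong refl) (auto simp: sum.delta)
  also have "\<dots> = (\<Sum>S\<in>?P. if S \<subseteq> X then f S else 0) * (\<Sum>T\<in>?P. if T \<subseteq> X then g T else 0)"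
    by (simp add: sum_product)
  also have "\<dots> = Bk_eval X f * Bk_eval X g"
    using assms by (simp add: Bk_eval_def sum_Pow_restrict)
  finally show ?thesis .
qed

lemma Bk_eq_zeroI:
  fixes f :: "nat set \<Rightarrow> 'a::field"
  assumes f: "f \<in> carrier (Bk k)" and eval: "\<And>X. X \<subseteq> {1..k} \<Longrightarrow> Bk_eval X f = 0"
  shows "f = (\<lambda>S. 0)"
proof (rule ccontr)
  assume "f \<noteq> (\<lambda>S. 0)"
  then obtain S where S: "f S \<noteq> 0" and min: "\<And>T. f T \<noteq> 0 \<Longrightarrow> card S \<le> card T"
    using ex_has_least_nat[of "\<lambda>S. f S \<noteq> 0" _ card] by blast
  have "S \<subseteq> {1..k}"
    using S f by (auto simp: Bk_simps)
  then have "finite S"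
    using finite_subset by blast
  have "f T = 0" if "T \<in> Pow S - {S}" for T
  proof -
    have "card T < card S"
      using that \<open>finite S\<close> by (intro psubset_card_mono) auto
    then show ?thesis
      using min by (meson not_le)
  qed
  then have "Bk_eval S f = f S"
    unfolding Bk_eval_def using \<open>finite S\<close> by (subst sum.remove[of _ S]) auto
  with eval[OF \<open>S \<subseteq> {1..k}\<close>] S show False
    by simp
qed

lemma Bk_eqI:
  fixes f g :: "nat set \<Rightarrow> 'a::field"
  assumes "f \<in> carrier (Bk k)" "g \<in> carrier (Bk k)"
    and "\<And>X. X \<subseteq> {1..k} \<Longrightarrow> Bk_eval X f = Bk_eval X g"
  shows "f = g"
proof -
  have "(\<lambda>S. f S - g S) = (\<lambda>S. 0)"
    using assms by (intro Bk_eq_zeroI[of _ k]) (auto simp: Bk_simps Bk_eval_def sum_subtractf)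
  then show ?thesis
    by (simp add: fun_eq_iff)
qed

lemma Bk_cring: "cring (Bk k :: (nat set \<Rightarrow> 'a::field) ring)"
proof (rule cringI)
  show "abelian_group (Bk k :: (nat set \<Rightarrow> 'a) ring)"
  proof (rule abelian_groupI)
    fix x :: "nat set \<Rightarrow> 'a"
    assume "x \<in> carrier (Bk k)"
    then show "\<exists>y\<in>carrier (Bk k). y \<oplus>\<^bsub>Bk k\<^esub> x = \<zero>\<^bsub>Bk k\<^esub>"
      by (intro bexI[of _ "\<lambda>S. - x S"]) (simp_all add: Bk_simps)
  qed (auto simp: Bk_simps add_ac)
  show "comm_monoid (Bk k :: (nat set \<Rightarrow> 'a) ring)"
  proof (rule comm_monoidI)
    fix x y z :: "nat set \<Rightarrow> 'a"
    show "x \<otimes>\<^bsub>Bk k\<^esub> y \<otimes>\<^bsub>Bk k\<^esub> z = x \<otimes>\<^bsub>Bk k\<^esub> (y \<otimes>\<^bsub>Bk k\<^esub> z)"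
      by (rule Bk_eqI[OF Bk_mult_closed Bk_mult_closed]) (simp add: Bk_eval_mult)
    show "x \<otimes>\<^bsub>Bk k\<^esub> y = y \<otimes>\<^bsub>Bk k\<^esub> x"
      by (rule Bk_eqI[OF Bk_mult_closed Bk_mult_closed]) (simp add: Bk_eval_mult)
  next
    fix x :: "nat set \<Rightarrow> 'a"
    assume "x \<in> carrier (Bk k)"
    then show "\<one>\<^bsub>Bk k\<^esub> \<otimes>\<^bsub>Bk k\<^esub> x = x"
      by (rule Bk_eqI[OF Bk_mult_closed]) (simp add: Bk_eval_mult Bk_eval_one finite_subset)
  qed (simp_all add: Bk_mult_closed, simp add: Bk_simps)
  fix x y z :: "nat set \<Rightarrow> 'a"
  show "(x \<oplus>\<^bsub>Bk k\<^esub> y) \<otimes>\<^bsub>Bk k\<^esub> z = x \<otimes>\<^bsub>Bk k\<^esub> z \<oplus>\<^bsub>Bk k\<^esub> y \<otimes>\<^bsub>Bk k\<^esub> z"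
    by (rule Bk_eqI[OF Bk_mult_closed Bk_add_closed[OF Bk_mult_closed Bk_mult_closed]])
      (simp add: Bk_eval_mult Bk_eval_add distrib_right)
qed

interpretation Bk: cring "Bk k :: (nat set \<Rightarrow> 'a::field) ring" for k
  by (rule Bk_cring)

lemma Bk_eval_uminus:
  fixes f :: "nat set \<Rightarrow> 'a::field"
  assumes "f \<in> carrier (Bk k)"
  shows "Bk_eval X (\<ominus>\<^bsub>Bk k\<^esub> f) = - Bk_eval X f"
proof -
  have "Bk_eval X (\<ominus>\<^bsub>Bk k\<^esub> f \<oplus>\<^bsub>Bk k\<^esub> f) = Bk_eval X (\<zero>\<^bsub>Bk k\<^esub>)"
    using Bk.l_neg[OF assms] by simp
  then have "Bk_eval X (\<ominus>\<^bsub>Bk k\<^esub> f) + Bk_eval X f = 0"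
    by (simp only: Bk_eval_add Bk_eval_zero)
  then show ?thesis
    by (simp add: eq_neg_iff_add_eq_0)
qed

lemma Bk_eval_pow:
  fixes f :: "nat set \<Rightarrow> 'a::field"
  assumes "X \<subseteq> {1..k}"
  shows "Bk_eval X (f [^]\<^bsub>Bk k\<^esub> n) = Bk_eval X f ^ n"
  using assms by (induction n) (simp_all add: Bk_eval_mult Bk_eval_one finite_subset)

lemma Bk_eval_finsum:
  fixes F :: "'b \<Rightarrow> nat set \<Rightarrow> 'a::field"
  assumes "finite A" "F \<in> A \<rightarrow> carrier (Bk k)"
  shows "Bk_eval X (\<Oplus>\<^bsub>Bk k\<^esub> a \<in> A. F a) = (\<Sum>a\<in>A. Bk_eval X (F a))"
  using assms by (induction A rule: finite_induct) (simp_all add: Bk_eval_zero Bk_eval_add)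

lemma Bk_eval_finprod:
  fixes F :: "'b \<Rightarrow> nat set \<Rightarrow> 'a::field"
  assumes "finite A" "F \<in> A \<rightarrow> carrier (Bk k)" "X \<subseteq> {1..k}"
  shows "Bk_eval X (\<Otimes>\<^bsub>Bk k\<^esub> a \<in> A. F a) = (\<Prod>a\<in>A. Bk_eval X (F a))"
  using assms
  by (induction A rule: finite_induct) (simp_all add: Bk_eval_one Bk_eval_mult finite_subset)

lemma Bk_eval_incl_excl_power_sum:
  fixes \<alpha> :: "'c \<Rightarrow> nat set \<Rightarrow> 'a::field"
  assumes "X \<subseteq> {1..k}" "finite J" "\<alpha> \<in> J \<rightarrow> carrier (Bk k)"
  shows "Bk_eval X (incl_excl_power_sum (Bk k) \<alpha> J n) = 1 - (\<Prod>j\<in>J. 1 - Bk_eval X (\<alpha> j) ^ n)"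
proof -
  have "finite X"
    using assms(1) finite_subset by blast
  have "Bk_eval X ((\<ominus>\<^bsub>Bk k\<^esub> \<one>\<^bsub>Bk k\<^esub>) [^]\<^bsub>Bk k\<^esub> (card A + 1) \<otimes>\<^bsub>Bk k\<^esub> (\<Otimes>\<^bsub>Bk k\<^esub> j \<in> A. \<alpha> j) [^]\<^bsub>Bk k\<^esub> n)
      = (-1) ^ (card A + 1) * (\<Prod>j\<in>A. Bk_eval X (\<alpha> j) ^ n)"
    if "A \<in> {A. A \<subseteq> J \<and> A \<noteq> {}}" for A
  proof -
    have "Bk_eval X (\<Otimes>\<^bsub>Bk k\<^esub> j \<in> A. \<alpha> j) = (\<Prod>j\<in>A. Bk_eval X (\<alpha> j))"
      using that assms finite_subset[of A J] by (intro Bk_eval_finprod) auto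
    then show ?thesis
      using assms(1) \<open>finite X\<close>
      by (simp add: Bk_eval_mult Bk_eval_pow Bk_eval_uminus Bk_eval_one prod_power_distrib)
  qed
  then show ?thesis
    using assms unfolding incl_excl_power_sum_def
    by (subst Bk_eval_finsum) (auto intro!: Bk.m_closed Bk.nat_pow_closed Bk.finprod_closed
        simp: one_minus_prod_one_minus)
qed

lemma Bk_incl_excl_power_sum_mult:
  fixes \<alpha> :: "'c \<Rightarrow> nat set \<Rightarrow> 'a::{field,finite}"
  assumes "finite J" "\<alpha> \<in> J \<rightarrow> carrier (Bk k)" "i \<in> J"
  shows "incl_excl_power_sum (Bk k) \<alpha> J (card (UNIV :: 'a set) - 1) \<otimes>\<^bsub>Bk k\<^esub> \<alpha> i = \<alpha> i"
proof (rule Bk_eqI[OF Bk_mult_closed])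
  show "\<alpha> i \<in> carrier (Bk k)"
    using assms by blast
  fix X
  assume X: "X \<subseteq> {1..k}"
  show "Bk_eval X (incl_excl_power_sum (Bk k) \<alpha> J (card (UNIV :: 'a set) - 1) \<otimes>\<^bsub>Bk k\<^esub> \<alpha> i) = Bk_eval X (\<alpha> i)"
  proof (cases "Bk_eval X (\<alpha> i) = 0")
    case False
    then have "(\<Prod>j\<in>J. 1 - Bk_eval X (\<alpha> j) ^ (card (UNIV :: 'a set) - 1)) = 0"
      using assms(1,3) field_power_card_minus_one[OF False] by (intro prod_zero) auto
    then show ?thesis
      using X assms by (simp add: Bk_eval_mult Bk_eval_incl_excl_power_sum)
  qed (use X in \<open>simp add: Bk_eval_mult\<close>)
qed

lemma Bk_genideal_eq_principal:
  fixes \<alpha> :: "'c \<Rightarrow> nat set \<Rightarrow> 'a::{field,finite}"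
  assumes "finite J" "\<alpha> \<in> J \<rightarrow> carrier (Bk k)"
  shows "Idl\<^bsub>Bk k\<^esub> (\<alpha> ` J) = Idl\<^bsub>Bk k\<^esub> {incl_excl_power_sum (Bk k) \<alpha> J (card (UNIV :: 'a set) - 1)}"
proof (rule Bk.genideal_eq_genideal_singletonI)
  have "card {0, 1 :: 'a} \<le> card (UNIV :: 'a set)"
    by (rule card_mono) auto
  then show "incl_excl_power_sum (Bk k) \<alpha> J (card (UNIV :: 'a set) - 1) \<in> Idl\<^bsub>Bk k\<^esub> (\<alpha> ` J)"
    using assms by (intro Bk.incl_excl_power_sum_in_genideal) auto
next
  show "\<alpha> ` J \<subseteq> carrier (Bk k)"
    using assms(2) by blast
next
  fix s
  assume "s \<in> \<alpha> ` J"
  then show "incl_excl_power_sum (Bk k) \<alpha> J (card (UNIV :: 'a set) - 1) \<otimes>\<^bsub>Bk k\<^esub> s = s"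
    using Bk_incl_excl_power_sum_mult[OF assms] by blast
qed

lemma Bk_ideal_principal:
  assumes "ideal I (Bk k :: (nat set \<Rightarrow> 'a::{field,finite}) ring)"
  shows "principalideal I (Bk k)"
proof (rule principalidealI[OF assms])
  have "I \<subseteq> carrier (Bk k)"
    using ideal.Icarr[OF assms] by blast
  then have "finite I"
    using finite_carrier_Bk finite_subset by blast
  have "I = Idl\<^bsub>Bk k\<^esub> (id ` I)"
    using Bk.genideal_minimal[OF assms] Bk.genideal_self[OF \<open>I \<subseteq> carrier (Bk k)\<close>] by auto
  also have "\<dots> = Idl\<^bsub>Bk k\<^esub> {incl_excl_power_sum (Bk k) id I (card (UNIV :: 'a set) - 1)}"
    using \<open>finite I\<close> \<open>I \<subseteq> carrier (Bk k)\<close> by (intro Bk_genideal_eq_principal) auto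
  finally have "I = Idl\<^bsub>Bk k\<^esub> {incl_excl_power_sum (Bk k) id I (card (UNIV :: 'a set) - 1)}" .
  moreover have "incl_excl_power_sum (Bk k) id I (card (UNIV :: 'a set) - 1) \<in> carrier (Bk k)"
    using \<open>I \<subseteq> carrier (Bk k)\<close> by (intro Bk.incl_excl_power_sum_closed) auto
  ultimately show "\<exists>g\<in>carrier (Bk k). I = Idl\<^bsub>Bk k\<^esub> {g}"
    by blast
qed

theorem proposition2p6:
  fixes p r k m :: nat
    and \<alpha> :: "nat \<Rightarrow> nat set \<Rightarrow> 'a::{field, finite}"
  assumes "prime p" and "r \<ge> 1" and "card (UNIV :: 'a set) = p ^ r" and "k \<ge> 1"
    and "\<And>j. j \<in> {1..m} \<Longrightarrow> \<alpha> j \<in> carrier (Bk k)"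
  shows "Idl\<^bsub>Bk k\<^esub> (\<alpha> ` {1..m}) =
           Idl\<^bsub>Bk k\<^esub> {\<Oplus>\<^bsub>Bk k\<^esub> A \<in> {A. A \<subseteq> {1..m} \<and> A \<noteq> {}}.
              ((\<ominus>\<^bsub>Bk k\<^esub> \<one>\<^bsub>Bk k\<^esub>) [^]\<^bsub>Bk k\<^esub> (card A + 1))
                \<otimes>\<^bsub>Bk k\<^esub> ((\<Otimes>\<^bsub>Bk k\<^esub> j \<in> A. \<alpha> j) [^]\<^bsub>Bk k\<^esub> (p ^ r - 1))}
         \<and> (\<forall>I :: (nat set \<Rightarrow> 'a) set. ideal I (Bk k) \<longrightarrow> principalideal I (Bk k))"
proof -
  have "\<alpha> \<in> {1..m} \<rightarrow> carrier (Bk k)"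
    using assms(5) by blast
  then have "Idl\<^bsub>Bk k\<^esub> (\<alpha> ` {1..m}) = Idl\<^bsub>Bk k\<^esub> {incl_excl_power_sum (Bk k) \<alpha> {1..m} (p ^ r - 1)}"
    using Bk_genideal_eq_principal[of "{1..m}" \<alpha> k] assms(3) by simp
  then show ?thesis
    unfolding incl_excl_power_sum_def using Bk_ideal_principal by blast
qed

end
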